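(* Let $\delta\in(0,1)$, $A>0$, $D>0$, $B>0$, and define $H(z)=Az-Bz^{1+\delta}-Dz^{1-\delta}$ for $z>0$, and $H^{\max}=\sup_{z>0}H(z)$. Then: (a) for $B\in(0,A^2/(4D))$ we have $H^{\max}>0$, the set $\{z>0: H(z)>0\}$ is an interval $(\mu,\nu)$, and $H^{\max}=H(z_0)$ for some $z_0\in(\mu,\nu)$; (b) $H^{\max}\to0^+$ and $\nu-\mu\to0^+$ as $B\to (A^2/(4D))^-$; (c) for every $p>0$ there is $B(p)\in(0,A^2/(4D))$ such that $H^{\max}=p$ when $B=B(p)$, and $B(p)\to A^2/(4D)$ as $p\to0^+$.
   Context: Here $\mu=\mu(B)$, $\nu=\nu(B)$ depend on $B$ (with $A,D,\delta$ fixed). *)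

theory Defs
  imports "HOL-Analysis.Analysis"
begin

definition H :: "real \<Rightarrow> real \<Rightarrow> real \<Rightarrow> real \<Rightarrow> real \<Rightarrow> real" where
  "H A B D \<delta> z = A * z - B * z powr (1 + \<delta>) - D * z powr (1 - \<delta>)"

definition Hmax :: "real \<Rightarrow> real \<Rightarrow> real \<Rightarrow> real \<Rightarrow> real" where
  "Hmax A B D \<delta> = (SUP z\<in>{0<..}. H A B D \<delta> z)"

end

theory Submission
  imports Defs
begin

text \<open>Substituting \<open>t = z\<^sup>\<delta>\<close> gives \<open>H(z) = z (A - B t - D / t)\<close>, so \<open>H(z) > 0\<close> exactly when
  \<open>B t\<^sup>2 - A t + D < 0\<close>, i.e. when \<open>z\<^sup>\<delta>\<close> lies strictly between the two roots of this quadratic.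
  For \<open>0 < B < A\<^sup>2/(4D)\<close> these roots are real and positive, and they merge as \<open>B\<close> tends to
  \<open>A\<^sup>2/(4D)\<close>. On the closed positivity interval \<open>H\<close> is continuous, so the supremum is a
  maximum, and by AM-GM it is at most \<open>\<nu> (A - 2 \<surd>(B D))\<close>, which tends to \<open>0\<close>.
  Since \<open>H\<close> is affine and antitone in \<open>B\<close>, \<open>Hmax\<close> is convex, hence continuous, and
  antitone in \<open>B\<close>; it exceeds any \<open>p\<close> for suitable \<open>B\<close>, so the intermediate value theorem
  yields \<open>B(p)\<close>, and monotonicity forces \<open>B(p) \<rightarrow> A\<^sup>2/(4D)\<close> as \<open>p \<rightarrow> 0\<close>.\<close>

lemma H_eq_mult:
  assumes "0 < z"
  shows "H A B D \<delta> z = z * (A - B * z powr \<delta> - D / z powr \<delta>)"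
  using assms by (simp add: H_def powr_add powr_diff field_simps)

lemma H_affine_in_B:
  "H A ((1 - u) * B1 + u * B2) D \<delta> z = (1 - u) * H A B1 D \<delta> z + u * H A B2 D \<delta> z"
  unfolding H_def by (simp add: algebra_simps)

lemma H_antimono_in_B:
  assumes "B1 \<le> B2"
  shows "H A B2 D \<delta> z \<le> H A B1 D \<delta> z"
  using assms unfolding H_def by (simp add: mult_right_mono)

lemma quadratic_less_0_iff_between_roots:
  fixes a b c x :: real
  assumes "0 < a" "0 \<le> b\<^sup>2 - 4 * a * c"
  shows "a * x\<^sup>2 - b * x + c < 0 \<longleftrightarrow>
    (b - sqrt (b\<^sup>2 - 4 * a * c)) / (2 * a) < x \<and> x < (b + sqrt (b\<^sup>2 - 4 * a * c)) / (2 * a)"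
    (is "_ \<longleftrightarrow> ?lo < x \<and> x < ?hi")
proof -
  have s: "0 \<le> sqrt (b\<^sup>2 - 4 * a * c)" "(sqrt (b\<^sup>2 - 4 * a * c))\<^sup>2 = b\<^sup>2 - 4 * a * c"
    using assms(2) by simp_all
  have "a * x\<^sup>2 - b * x + c = a * ((x - ?lo) * (x - ?hi))"
    using assms(1) s(2) by (simp add: field_simps power2_eq_square)
  moreover have "?lo \<le> ?hi"
    using s(1) assms(1) by (simp add: divide_right_mono)
  ultimately show ?thesis
    using assms(1) by (auto simp: mult_less_0_iff zero_less_mult_iff)
qed

lemma Sup_eq_max_of_positivity_interval:
  fixes f :: "real \<Rightarrow> real"
  assumes "0 < a" "a < b" "continuous_on {a..b} f"
    and pos: "{z. 0 < z \<and> 0 < f z} = {a<..<b}"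
  shows "\<exists>z0\<in>{a<..<b}. (SUP z\<in>{0<..}. f z) = f z0 \<and> (\<forall>z>0. f z \<le> f z0)"
proof -
  have pos_iff: "0 < z \<and> 0 < f z \<longleftrightarrow> a < z \<and> z < b" for z
    using pos by (simp add: set_eq_iff)
  obtain z0 where z0: "a \<le> z0" "z0 \<le> b" and max: "\<And>z. a \<le> z \<Longrightarrow> z \<le> b \<Longrightarrow> f z \<le> f z0"
    using continuous_attains_sup[OF compact_Icc _ assms(3)] assms(2) by fastforce
  have "0 < f ((a + b) / 2)"
    using pos_iff[of "(a + b) / 2"] assms(1,2) by simp
  moreover have "f ((a + b) / 2) \<le> f z0"
    using assms(2) by (intro max) auto
  ultimately have "0 < f z0"
    by linarith
  then have z0_in: "z0 \<in> {a<..<b}"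
    using pos_iff[of z0] z0 assms(1) by simp
  have le: "f z \<le> f z0" if "0 < z" for z
  proof (cases "a \<le> z \<and> z \<le> b")
    case False
    then show ?thesis
      using pos_iff[of z] that \<open>0 < f z0\<close> by linarith
  qed (simp add: max)
  have "(SUP z\<in>{0<..}. f z) = f z0"
    using z0_in assms(1) le by (intro cSup_eq_maximum) auto
  with z0_in le show ?thesis
    by blast
qed

lemma powr_less_powr_iff:
  fixes e x y :: real
  assumes "0 < e" "0 < x" "0 < y"
  shows "x powr e < y powr e \<longleftrightarrow> x < y"
  using assms powr_less_mono2[of e x y] powr_less_cancel2[of e x y] by auto

locale H_parameters =
  fixes A D \<delta> :: real
  assumes \<delta>_pos: "0 < \<delta>" and A_pos: "0 < A" and D_pos: "0 < D"
begin

abbreviation Bcrit :: real where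
  "Bcrit \<equiv> A\<^sup>2 / (4 * D)"

lemma Bcrit_pos: "0 < Bcrit"
  using A_pos D_pos by simp

lemma discriminant_pos:
  assumes "B < Bcrit"
  shows "0 < A\<^sup>2 - 4 * B * D"
  using assms D_pos by (simp add: field_simps)

definition t_lo :: "real \<Rightarrow> real" where
  "t_lo B = (A - sqrt (A\<^sup>2 - 4 * B * D)) / (2 * B)"

definition t_hi :: "real \<Rightarrow> real" where
  "t_hi B = (A + sqrt (A\<^sup>2 - 4 * B * D)) / (2 * B)"

definition mu :: "real \<Rightarrow> real" where
  "mu B = t_lo B powr (1 / \<delta>)"

definition nu :: "real \<Rightarrow> real" where
  "nu B = t_hi B powr (1 / \<delta>)"

lemma t_lo_pos:
  assumes "0 < B" "B < Bcrit"
  shows "0 < t_lo B"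
proof -
  have "sqrt (A\<^sup>2 - 4 * B * D) < sqrt (A\<^sup>2)"
    using assms D_pos by (intro real_sqrt_less_mono) simp
  then show ?thesis
    using A_pos assms(1) by (simp add: t_lo_def)
qed

lemma t_lo_less_t_hi:
  assumes "0 < B" "B < Bcrit"
  shows "t_lo B < t_hi B"
  using assms discriminant_pos[OF assms(2)] by (simp add: t_lo_def t_hi_def divide_strict_right_mono)

lemma positive_iff_between_roots:
  assumes "0 < B" "B < Bcrit" "0 < t"
  shows "0 < A - B * t - D / t \<longleftrightarrow> t_lo B < t \<and> t < t_hi B"
proof -
  have "A - B * t - D / t = - (B * t\<^sup>2 - A * t + D) / t"
    using assms(3) by (simp add: field_simps power2_eq_square)
  then have "0 < A - B * t - D / t \<longleftrightarrow> B * t\<^sup>2 - A * t + D < 0"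
    using assms(3) by (simp add: zero_less_divide_iff) arith
  also have "\<dots> \<longleftrightarrow> t_lo B < t \<and> t < t_hi B"
    unfolding t_lo_def t_hi_def using assms(1) discriminant_pos[OF assms(2)]
    by (intro quadratic_less_0_iff_between_roots) auto
  finally show ?thesis .
qed

lemma mu_pos:
  assumes "0 < B" "B < Bcrit"
  shows "0 < mu B"
  using t_lo_pos[OF assms] by (simp add: mu_def)

lemma mu_less_nu:
  assumes "0 < B" "B < Bcrit"
  shows "mu B < nu B"
  unfolding mu_def nu_def using t_lo_pos[OF assms] t_lo_less_t_hi[OF assms] \<delta>_pos
  by (intro powr_less_mono2) auto

lemma positive_set_eq:
  assumes "0 < B" "B < Bcrit"
  shows "{z. 0 < z \<and> 0 < H A B D \<delta> z} = {mu B<..<nu B}"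
proof -
  have "0 < t_hi B"
    using t_lo_pos[OF assms] t_lo_less_t_hi[OF assms] by linarith
  have "0 < H A B D \<delta> z \<longleftrightarrow> mu B < z \<and> z < nu B" if "0 < z" for z
  proof -
    have z_eq: "z = (z powr \<delta>) powr (1 / \<delta>)"
      using that \<delta>_pos by (simp add: powr_powr)
    have "0 < H A B D \<delta> z \<longleftrightarrow> 0 < A - B * z powr \<delta> - D / z powr \<delta>"
      using that by (simp add: H_eq_mult zero_less_mult_iff)
    also have "\<dots> \<longleftrightarrow> t_lo B < z powr \<delta> \<and> z powr \<delta> < t_hi B"
      using that by (intro positive_iff_between_roots[OF assms]) simp
    also have "\<dots> \<longleftrightarrow> mu B < z \<and> z < nu B"
      using that \<delta>_pos t_lo_pos[OF assms] \<open>0 < t_hi B\<close>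
        powr_less_powr_iff[of "1 / \<delta>" "t_lo B" "z powr \<delta>"]
        powr_less_powr_iff[of "1 / \<delta>" "z powr \<delta>" "t_hi B"]
      by (simp add: mu_def nu_def flip: z_eq)
    finally show ?thesis .
  qed
  then show ?thesis
    using mu_pos[OF assms] by (auto simp: set_eq_iff)
qed

lemma Hmax_attained:
  assumes "0 < B" "B < Bcrit"
  shows "\<exists>z0\<in>{mu B<..<nu B}. Hmax A B D \<delta> = H A B D \<delta> z0 \<and> (\<forall>z>0. H A B D \<delta> z \<le> H A B D \<delta> z0)"
  unfolding Hmax_def
proof (rule Sup_eq_max_of_positivity_interval)
  show "continuous_on {mu B..nu B} (H A B D \<delta>)"
    using mu_pos[OF assms] unfolding H_def by (intro continuous_intros) auto
qed (use assms mu_pos mu_less_nu positive_set_eq in auto)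

lemma Hmax_ge:
  assumes "0 < B" "B < Bcrit" "0 < z"
  shows "H A B D \<delta> z \<le> Hmax A B D \<delta>"
  using Hmax_attained[OF assms(1,2)] assms(3) by force

lemma Hmax_pos:
  assumes "0 < B" "B < Bcrit"
  shows "0 < Hmax A B D \<delta>"
  using Hmax_attained[OF assms] positive_set_eq[OF assms] mu_pos[OF assms] by force

lemma Hmax_attained_positive:
  assumes "0 < B" "B < Bcrit"
  obtains z0 where "0 < z0" "Hmax A B D \<delta> = H A B D \<delta> z0"
  using Hmax_attained[OF assms] mu_pos[OF assms] by (meson greaterThanLessThan_iff less_trans)

lemma Hmax_antimono:
  assumes "0 < B1" "B1 \<le> B2" "B2 < Bcrit"
  shows "Hmax A B2 D \<delta> \<le> Hmax A B1 D \<delta>"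
proof -
  have B2: "0 < B2" "B2 < Bcrit"
    using assms by auto
  obtain z0 where "0 < z0" and max: "Hmax A B2 D \<delta> = H A B2 D \<delta> z0"
    using Hmax_attained_positive[OF B2] .
  have "H A B2 D \<delta> z0 \<le> H A B1 D \<delta> z0"
    using assms(2) by (rule H_antimono_in_B)
  also have "\<dots> \<le> Hmax A B1 D \<delta>"
    using assms \<open>0 < z0\<close> by (intro Hmax_ge) auto
  finally show ?thesis
    by (simp add: max)
qed

lemma convex_on_Hmax: "convex_on {0<..<Bcrit} (\<lambda>B. Hmax A B D \<delta>)"
proof (rule convex_onI)
  fix u B1 B2 :: real
  assume u: "0 < u" "u < 1" and B1: "B1 \<in> {0<..<Bcrit}" and B2: "B2 \<in> {0<..<Bcrit}"
  let ?B = "(1 - u) * B1 + u * B2"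
  have "?B \<in> {0<..<Bcrit}"
    using convexD[OF convex_real_interval(8) B1 B2, of "1 - u" u] u by simp
  then obtain z0 where "0 < z0" and max: "Hmax A ?B D \<delta> = H A ?B D \<delta> z0"
    using Hmax_attained_positive[of ?B] by auto
  have "Hmax A ?B D \<delta> = (1 - u) * H A B1 D \<delta> z0 + u * H A B2 D \<delta> z0"
    by (simp add: max H_affine_in_B)
  also have "\<dots> \<le> (1 - u) * Hmax A B1 D \<delta> + u * Hmax A B2 D \<delta>"
    using u B1 B2 \<open>0 < z0\<close> by (intro add_mono mult_left_mono Hmax_ge) auto
  finally show "Hmax A ((1 - u) *\<^sub>R B1 + u *\<^sub>R B2) D \<delta> \<le> (1 - u) * Hmax A B1 D \<delta> + u * Hmax A B2 D \<delta>"
    by simp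
qed simp

lemma continuous_on_Hmax: "continuous_on {0<..<Bcrit} (\<lambda>B. Hmax A B D \<delta>)"
  by (rule convex_on_continuous[OF open_greaterThanLessThan convex_on_Hmax])

lemma Hmax_le_nu_mult:
  assumes "0 < B" "B < Bcrit"
  shows "Hmax A B D \<delta> \<le> nu B * (A - 2 * sqrt (B * D))"
proof -
  obtain z0 where z0: "z0 \<in> {mu B<..<nu B}" and max: "Hmax A B D \<delta> = H A B D \<delta> z0"
    using Hmax_attained[OF assms] by auto
  have "0 < z0" and H_pos: "0 < H A B D \<delta> z0"
    using z0 unfolding positive_set_eq[OF assms, symmetric] by simp_all
  define t where "t = z0 powr \<delta>"
  have "0 < t"
    using \<open>0 < z0\<close> by (simp add: t_def)
  have H_eq: "H A B D \<delta> z0 = z0 * (A - B * t - D / t)"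
    using \<open>0 < z0\<close> by (simp add: H_eq_mult t_def)
  have "0 < A - B * t - D / t"
    using H_pos \<open>0 < z0\<close> by (simp add: H_eq zero_less_mult_iff)
  have "sqrt (B * D) = sqrt ((B * t) * (D / t))"
    using \<open>0 < t\<close> by simp
  also have "\<dots> \<le> (B * t + D / t) / 2"
    using assms(1) D_pos \<open>0 < t\<close> by (intro arith_geo_mean_sqrt) auto
  finally have "A - B * t - D / t \<le> A - 2 * sqrt (B * D)"
    by simp
  then have "z0 * (A - B * t - D / t) \<le> nu B * (A - 2 * sqrt (B * D))"
    using z0 \<open>0 < z0\<close> \<open>0 < A - B * t - D / t\<close> by (intro mult_mono) auto
  then show ?thesis
    by (simp add: max H_eq)
qed

lemma tendsto_t_lo: "(t_lo \<longlongrightarrow> 2 * D / A) (at Bcrit within S)"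
proof -
  have "(t_lo \<longlongrightarrow> (A - sqrt (A\<^sup>2 - 4 * Bcrit * D)) / (2 * Bcrit)) (at Bcrit within S)"
    unfolding t_lo_def[abs_def] using Bcrit_pos by (intro tendsto_intros) auto
  then show ?thesis
    using A_pos D_pos by (simp add: field_simps power2_eq_square)
qed

lemma tendsto_t_hi: "(t_hi \<longlongrightarrow> 2 * D / A) (at Bcrit within S)"
proof -
  have "(t_hi \<longlongrightarrow> (A + sqrt (A\<^sup>2 - 4 * Bcrit * D)) / (2 * Bcrit)) (at Bcrit within S)"
    unfolding t_hi_def[abs_def] using Bcrit_pos by (intro tendsto_intros) auto
  then show ?thesis
    using A_pos D_pos by (simp add: field_simps power2_eq_square)
qed

lemma tendsto_mu: "(mu \<longlongrightarrow> (2 * D / A) powr (1 / \<delta>)) (at Bcrit within S)"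
  unfolding mu_def[abs_def] using A_pos D_pos by (intro tendsto_powr tendsto_t_lo tendsto_const) auto

lemma tendsto_nu: "(nu \<longlongrightarrow> (2 * D / A) powr (1 / \<delta>)) (at Bcrit within S)"
  unfolding nu_def[abs_def] using A_pos D_pos by (intro tendsto_powr tendsto_t_hi tendsto_const) auto

lemma eventually_below_Bcrit: "eventually (\<lambda>B. 0 < B \<and> B < Bcrit) (at_left Bcrit)"
  using eventually_at_left_real[OF Bcrit_pos] by simp

lemma Hmax_tendsto_0: "filterlim (\<lambda>B. Hmax A B D \<delta>) (at_right 0) (at_left Bcrit)"
proof (rule tendsto_imp_filterlim_at_right)
  show "eventually (\<lambda>B. 0 < Hmax A B D \<delta>) (at_left Bcrit)"
    using eventually_below_Bcrit by eventually_elim (simp add: Hmax_pos)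
  have "Bcrit * D = (A / 2)\<^sup>2"
    using D_pos by (simp add: power_divide)
  then have bound_vanishes: "A - 2 * sqrt (Bcrit * D) = 0"
    using A_pos by simp
  have "((\<lambda>B. nu B * (A - 2 * sqrt (B * D))) \<longlongrightarrow> (2 * D / A) powr (1 / \<delta>) * (A - 2 * sqrt (Bcrit * D)))
      (at_left Bcrit)"
    by (intro tendsto_intros tendsto_nu)
  then have bound_lim: "((\<lambda>B. nu B * (A - 2 * sqrt (B * D))) \<longlongrightarrow> 0) (at_left Bcrit)"
    by (simp only: bound_vanishes mult_zero_right)
  have "eventually (\<lambda>B. 0 \<le> Hmax A B D \<delta>) (at_left Bcrit)"
    using eventually_below_Bcrit by eventually_elim (simp add: Hmax_pos less_imp_le)
  moreover have "eventually (\<lambda>B. Hmax A B D \<delta> \<le> nu B * (A - 2 * sqrt (B * D))) (at_left Bcrit)"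
    using eventually_below_Bcrit by eventually_elim (simp add: Hmax_le_nu_mult)
  ultimately show "((\<lambda>B. Hmax A B D \<delta>) \<longlongrightarrow> 0) (at_left Bcrit)"
    by (rule real_tendsto_sandwich[OF _ _ tendsto_const bound_lim])
qed

lemma gap_tendsto_0: "filterlim (\<lambda>B. nu B - mu B) (at_right 0) (at_left Bcrit)"
proof (rule tendsto_imp_filterlim_at_right)
  show "((\<lambda>B. nu B - mu B) \<longlongrightarrow> 0) (at_left Bcrit)"
    using tendsto_diff[OF tendsto_nu tendsto_mu] by simp
  show "eventually (\<lambda>B. 0 < nu B - mu B) (at_left Bcrit)"
    using eventually_below_Bcrit by eventually_elim (simp add: mu_less_nu)
qed

lemma positivity_interval_gap_tendsto_0:
  fixes \<mu> \<nu> :: "real \<Rightarrow> real"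
  assumes ivl: "\<forall>B. 0 < B \<and> B < Bcrit \<longrightarrow> {z. 0 < z \<and> 0 < H A B D \<delta> z} = {\<mu> B<..<\<nu> B}"
  shows "filterlim (\<lambda>B. \<nu> B - \<mu> B) (at_right 0) (at_left Bcrit)"
proof -
  have eq: "eventually (\<lambda>B. nu B - mu B = \<nu> B - \<mu> B) (at_left Bcrit)"
    using eventually_below_Bcrit
  proof eventually_elim
    case (elim B)
    then have "{mu B<..<nu B} = {\<mu> B<..<\<nu> B}"
      using ivl positive_set_eq by metis
    then show ?case
      using elim mu_less_nu[of B] by (simp add: greaterThanLessThan_eq_iff)
  qed
  show ?thesis
    by (rule filterlim_cong[OF refl refl eq, THEN iffD1, OF gap_tendsto_0])
qed

lemma exists_Hmax_ge:
  assumes "0 < p"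
  shows "\<exists>B\<in>{0<..<Bcrit}. p \<le> Hmax A B D \<delta>"
proof -
  define z where "z = max ((2 * D / A) powr (1 / \<delta>)) (4 * p / A)"
  define t where "t = z powr \<delta>"
  define B where "B = A / (4 * t)"
  have "0 < z"
    using assms A_pos by (simp add: z_def less_max_iff_disj)
  then have "0 < t"
    by (simp add: t_def)
  have "2 * D / A = ((2 * D / A) powr (1 / \<delta>)) powr \<delta>"
    using A_pos D_pos \<delta>_pos by (simp add: powr_powr)
  also have "\<dots> \<le> t"
    unfolding t_def z_def using \<delta>_pos by (intro powr_mono2) auto
  finally have t_ge: "2 * D / A \<le> t" .
  have "0 < B"
    using A_pos \<open>0 < t\<close> by (simp add: B_def)
  have "B \<le> A / (4 * (2 * D / A))"
    unfolding B_def using A_pos D_pos t_ge \<open>0 < t\<close> by (intro divide_left_mono) auto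
  also have "\<dots> < Bcrit"
    using A_pos D_pos by (simp add: field_simps power2_eq_square)
  finally have "B < Bcrit" .
  have "D / t \<le> A / 2"
    using t_ge \<open>0 < t\<close> A_pos by (simp add: field_simps)
  moreover have "B * t = A / 4"
    using \<open>0 < t\<close> by (simp add: B_def)
  ultimately have g_ge: "A / 4 \<le> A - B * t - D / t"
    by linarith
  have "4 * p / A \<le> z"
    by (simp add: z_def)
  then have "p \<le> z * (A / 4)"
    using A_pos by (simp add: field_simps)
  also have "\<dots> \<le> z * (A - B * t - D / t)"
    using \<open>0 < z\<close> g_ge by (intro mult_left_mono) auto
  also have "\<dots> = H A B D \<delta> z"
    using \<open>0 < z\<close> by (simp add: H_eq_mult t_def)
  also have "\<dots> \<le> Hmax A B D \<delta>"
    using \<open>0 < B\<close> \<open>B < Bcrit\<close> \<open>0 < z\<close> by (rule Hmax_ge)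
  finally show ?thesis
    using \<open>0 < B\<close> \<open>B < Bcrit\<close> by auto
qed

lemma Hmax_surj:
  assumes "0 < p"
  shows "\<exists>B\<in>{0<..<Bcrit}. Hmax A B D \<delta> = p"
proof -
  obtain B1 where B1: "0 < B1" "B1 < Bcrit" and ge: "p \<le> Hmax A B1 D \<delta>"
    using exists_Hmax_ge[OF assms] by auto
  have "eventually (\<lambda>B. Hmax A B D \<delta> < p) (at_left Bcrit)"
    using Hmax_tendsto_0 assms by (auto simp: filterlim_at order_tendsto_iff)
  moreover have "eventually (\<lambda>B. B \<in> {B1<..<Bcrit}) (at_left Bcrit)"
    using B1 by (intro eventually_at_left_real)
  ultimately have "eventually (\<lambda>B. Hmax A B D \<delta> < p \<and> B \<in> {B1<..<Bcrit}) (at_left Bcrit)"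
    by (rule eventually_conj)
  then obtain B2 where B2: "B1 < B2" "B2 < Bcrit" and less: "Hmax A B2 D \<delta> < p"
    using eventually_happens'[OF trivial_limit_at_left_real] by auto
  have "continuous_on {B1..B2} (\<lambda>B. Hmax A B D \<delta>)"
    using B1 B2 by (intro continuous_on_subset[OF continuous_on_Hmax]) auto
  then obtain B where "B1 \<le> B" "B \<le> B2" "Hmax A B D \<delta> = p"
    using IVT2'[of "\<lambda>B. Hmax A B D \<delta>" B2 p B1] less ge B2 by auto
  then show ?thesis
    using B1 B2 by auto
qed

lemma inverse_Hmax_tendsto_Bcrit:
  assumes Bp: "\<forall>p>0. 0 < Bp p \<and> Bp p < Bcrit \<and> Hmax A (Bp p) D \<delta> = p"
  shows "(Bp \<longlongrightarrow> Bcrit) (at_right 0)"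
proof (rule order_tendstoI)
  fix a
  assume "Bcrit < a"
  have "eventually (\<lambda>p. 0 < p) (at_right (0::real))"
    by (rule eventually_at_right_less)
  then show "eventually (\<lambda>p. Bp p < a) (at_right 0)"
    by eventually_elim (use Bp \<open>Bcrit < a\<close> in fastforce)
next
  fix a
  assume "a < Bcrit"
  define c where "c = max a (Bcrit / 2)"
  have c: "0 < c" "c < Bcrit" "a \<le> c"
    using \<open>a < Bcrit\<close> Bcrit_pos by (auto simp: c_def)
  have a_less: "a < Bp p" if "0 < p" "p < Hmax A c D \<delta>" for p
  proof (rule ccontr)
    assume "\<not> a < Bp p"
    then have "Hmax A c D \<delta> \<le> Hmax A (Bp p) D \<delta>"
      using Bp c that(1) by (intro Hmax_antimono) auto
    then show False
      using Bp that by auto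
  qed
  show "eventually (\<lambda>p. a < Bp p) (at_right 0)"
    using eventually_at_right_real[OF Hmax_pos[OF c(1,2)]] by eventually_elim (simp add: a_less)
qed

end

theorem lemma3p2:
  fixes A D \<delta> :: real
  assumes "0 < \<delta>" "\<delta> < 1" "0 < A" "0 < D"
  shows
   "(\<forall>B. 0 < B \<and> B < A\<^sup>2 / (4 * D) \<longrightarrow>
        Hmax A B D \<delta> > 0 \<and>
        (\<exists>\<mu> \<nu>. \<mu> < \<nu> \<and> {z. 0 < z \<and> H A B D \<delta> z > 0} = {\<mu><..<\<nu>} \<and>
                (\<exists>z0\<in>{\<mu><..<\<nu>}. Hmax A B D \<delta> = H A B D \<delta> z0)))
    \<and> filterlim (\<lambda>B. Hmax A B D \<delta>) (at_right 0) (at_left (A\<^sup>2 / (4 * D)))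
    \<and> (\<forall>\<mu> \<nu> :: real \<Rightarrow> real.
         (\<forall>B. 0 < B \<and> B < A\<^sup>2 / (4 * D) \<longrightarrow>
              {z. 0 < z \<and> H A B D \<delta> z > 0} = {\<mu> B<..<\<nu> B}) \<longrightarrow>
         filterlim (\<lambda>B. \<nu> B - \<mu> B) (at_right 0) (at_left (A\<^sup>2 / (4 * D))))
    \<and> (\<exists>Bp :: real \<Rightarrow> real.
         (\<forall>p>0. 0 < Bp p \<and> Bp p < A\<^sup>2 / (4 * D) \<and> Hmax A (Bp p) D \<delta> = p) \<and>
         (Bp \<longlongrightarrow> A\<^sup>2 / (4 * D)) (at_right 0))"
proof -
  interpret H_parameters A D \<delta>
    using assms(1,3,4) by unfold_locales
  have part_a: "0 < Hmax A B D \<delta> \<and> (\<exists>\<mu> \<nu>. \<mu> < \<nu> \<and> {z. 0 < z \<and> 0 < H A B D \<delta> z} = {\<mu><..<\<nu>} \<and>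
      (\<exists>z0\<in>{\<mu><..<\<nu>}. Hmax A B D \<delta> = H A B D \<delta> z0))" if "0 < B \<and> B < Bcrit" for B
    using that Hmax_pos mu_less_nu positive_set_eq Hmax_attained by meson
  have "\<forall>p>0. \<exists>B. 0 < B \<and> B < Bcrit \<and> Hmax A B D \<delta> = p"
    using Hmax_surj by fastforce
  then obtain Bp where Bp: "\<forall>p>0. 0 < Bp p \<and> Bp p < Bcrit \<and> Hmax A (Bp p) D \<delta> = p"
    by metis
  show ?thesis
    using part_a Hmax_tendsto_0 positivity_interval_gap_tendsto_0 Bp inverse_Hmax_tendsto_Bcrit[OF Bp] by blast
qed

end
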